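(* Let $G$ be a network with three sources and three terminals containing no vertex of type $(3,3)$, $(2,3)$ or $(3,2)$, and let $\mathbb{F}$ be a finite field. For each color $c=(s_a,s_b,t_c,t_d)$ occurring among the $(2,2)$ vertices of $G$, let $f_c:\mathbb{F}^2\to\mathbb{F}$ be an arbitrary function. Then there exists a single network code on $G$ such that, for every such color $c$, every vertex of type $(2,2)$ and color $c$ can compute $f_c(X_a,X_b)$ from the symbols on its incoming edges.
   Context: A network is a finite directed acyclic graph $G=(V,E)$ (parallel edges allowed), every edge of unit capacity carrying one symbol of a finite field $\mathbb{F}$, with three sources $s_1,s_2,s_3$ (no incoming edges; $s_i$ holds $X_i\in\mathbb{F}$) and three terminals $t_1,t_2,t_3$ (no outgoing edges). A network code assigns to each edge leaving a source a function of its symbol, and to each edge leaving a non-source vertex $v$ a function of the symbols on edges entering $v$. For $v\in V$, $c_s(v)$ is the number of sources with a directed path to $v$ and $c_t(v)$ the number of terminals reachable from $v$ (a vertex reaches itself); $(c_s(v),c_t(v))$ is the type of $v$. For $v$ of type $(2,2)$, its color $\mathrm{col}(v)=(s_a,s_b,t_c,t_d)$ lists the two sources reaching $v$ and the two terminals reachable from $v$. *)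

theory Defs
  imports "Graph_Theory.Digraph" "HOL-Library.FuncSet"
begin

definition network :: "('v,'e) pre_digraph \<Rightarrow> (nat \<Rightarrow> 'v) \<Rightarrow> (nat \<Rightarrow> 'v) \<Rightarrow> bool" where
  "network G s t \<longleftrightarrow>
     fin_digraph G \<and>
     (\<forall>v\<in>verts G. \<not> (v \<rightarrow>\<^sup>+\<^bsub>G\<^esub> v)) \<and>
     inj_on s {1,2,3} \<and> inj_on t {1,2,3} \<and>
     s ` {1,2,3} \<subseteq> verts G \<and> t ` {1,2,3} \<subseteq> verts G \<and>
     (\<forall>i\<in>{1,2,3}. in_arcs G (s i) = {}) \<and>
     (\<forall>j\<in>{1,2,3}. out_arcs G (t j) = {})"

definition src_set :: "('v,'e) pre_digraph \<Rightarrow> (nat \<Rightarrow> 'v) \<Rightarrow> 'v \<Rightarrow> nat set" where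
  "src_set G s v = {i \<in> {1,2,3}. s i \<rightarrow>\<^sup>*\<^bsub>G\<^esub> v}"

definition term_set :: "('v,'e) pre_digraph \<Rightarrow> (nat \<Rightarrow> 'v) \<Rightarrow> 'v \<Rightarrow> nat set" where
  "term_set G t v = {j \<in> {1,2,3}. v \<rightarrow>\<^sup>*\<^bsub>G\<^esub> t j}"

definition c_s :: "('v,'e) pre_digraph \<Rightarrow> (nat \<Rightarrow> 'v) \<Rightarrow> 'v \<Rightarrow> nat" where
  "c_s G s v = card (src_set G s v)"

definition c_t :: "('v,'e) pre_digraph \<Rightarrow> (nat \<Rightarrow> 'v) \<Rightarrow> 'v \<Rightarrow> nat" where
  "c_t G t v = card (term_set G t v)"

definition vtype :: "('v,'e) pre_digraph \<Rightarrow> (nat \<Rightarrow> 'v) \<Rightarrow> (nat \<Rightarrow> 'v) \<Rightarrow> 'v \<Rightarrow> nat \<times> nat" where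
  "vtype G s t v = (c_s G s v, c_t G t v)"

text \<open>Color of a (2,2) vertex: (a,b,c,d) with sources s a, s b (a < b) reaching v and
  terminals t c, t d (c < d) reachable from v.\<close>
definition col :: "('v,'e) pre_digraph \<Rightarrow> (nat \<Rightarrow> 'v) \<Rightarrow> (nat \<Rightarrow> 'v) \<Rightarrow> 'v \<Rightarrow> nat \<times> nat \<times> nat \<times> nat" where
  "col G s t v = (Min (src_set G s v), Max (src_set G s v), Min (term_set G t v), Max (term_set G t v))"

text \<open>A network code: srcf e gives the symbol on an arc e leaving a source as a function of
  that source's symbol; locf e gives the symbol on an arc leaving a non-source vertex as a
  function of the symbols on the arcs entering that vertex (an assignment on in-arcs).
  Given source messages X (X i the symbol of s i), sigma is the induced symbol assignment.\<close>
definition induced :: "('v,'e) pre_digraph \<Rightarrow> (nat \<Rightarrow> 'v) \<Rightarrow>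
    ('e \<Rightarrow> 'f \<Rightarrow> 'f) \<Rightarrow> ('e \<Rightarrow> ('e \<Rightarrow> 'f) \<Rightarrow> 'f) \<Rightarrow> (nat \<Rightarrow> 'f) \<Rightarrow> ('e \<Rightarrow> 'f) \<Rightarrow> bool" where
  "induced G s srcf locf X sigma \<longleftrightarrow>
     (\<forall>e\<in>arcs G.
        (\<forall>i\<in>{1,2,3}. tail G e = s i \<longrightarrow> sigma e = srcf e (X i)) \<and>
        (tail G e \<notin> s ` {1,2,3} \<longrightarrow>
           sigma e = locf e (restrict sigma (in_arcs G (tail G e)))))"

definition computes :: "('v,'e) pre_digraph \<Rightarrow> (nat \<Rightarrow> 'v) \<Rightarrow>
    ('e \<Rightarrow> 'f \<Rightarrow> 'f) \<Rightarrow> ('e \<Rightarrow> ('e \<Rightarrow> 'f) \<Rightarrow> 'f) \<Rightarrow> 'v \<Rightarrow> ((nat \<Rightarrow> 'f) \<Rightarrow> 'f) \<Rightarrow> bool" where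
  "computes G s srcf locf v F \<longleftrightarrow>
     (\<exists>dec :: ('e \<Rightarrow> 'f) \<Rightarrow> 'f. \<forall>X sigma. induced G s srcf locf X sigma \<longrightarrow>
        dec (restrict sigma (in_arcs G v)) = F X)"

end

theory Submission
  imports Defs
begin

(* Let every vertex u carry a value depending on the source messages X:
   if exactly one source s_i reaches u, the value is X i; if u has type (2,2) and
   colour (a,b,c,d), it is f (a,b,c,d) (X a) (X b).  Call such vertices tracked.
   Sources send their symbol unchanged, and every other arc forwards the value of its
   tail, computed by a local decoder from the incoming symbols:
   - if some in-arc comes from a vertex reached by the same set of sources, copy it
     (a relay); in the absence of (2,3) vertices such a predecessor of a (2,2) vertex
     is itself (2,2) of the same colour, so the values agree;
   - otherwise u is of type (2,2) with sources {a,b}, and it has in-arcs whose tails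
     are reached only by s_a, resp. only by s_b; apply f to their symbols.
   An induction over arcs, ordered by the number of ancestors of their tails
   (well-founded because G is acyclic), shows that every arc with tracked tail carries
   the value of its tail; the decoder at a (2,2) vertex then computes the required
   function.  Only the absence of (2,3) vertices is needed. *)

lemma arc_adj: "e \<in> arcs G \<Longrightarrow> tail G e \<rightarrow>\<^bsub>G\<^esub> head G e"
  by (auto simp: arcs_ends_def arc_to_ends_def)

lemma src_set_bounded: "src_set G s u \<subseteq> {1,2,3}"
  by (auto simp: src_set_def)

lemma term_set_bounded: "term_set G t u \<subseteq> {1,2,3}"
  by (auto simp: term_set_def)

lemma src_set_arc_mono:
  assumes "network G s t" "e \<in> arcs G"
  shows "src_set G s (tail G e) \<subseteq> src_set G s (head G e)"
proof -
  interpret fin_digraph G using assms(1) by (simp add: network_def)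
  show ?thesis using arc_adj[OF assms(2)]
    by (auto simp: src_set_def intro: reachable_adj_trans)
qed

lemma term_set_arc_antimono:
  assumes "network G s t" "e \<in> arcs G"
  shows "term_set G t (head G e) \<subseteq> term_set G t (tail G e)"
proof -
  interpret fin_digraph G using assms(1) by (simp add: network_def)
  show ?thesis using arc_adj[OF assms(2)]
    by (auto simp: term_set_def intro: adj_reachable_trans)
qed

lemma in_arc_carrying_source:
  assumes net: "network G s t" and i: "i \<in> src_set G s u" and u: "u \<noteq> s i"
  shows "\<exists>e\<in>in_arcs G u. i \<in> src_set G s (tail G e) \<and> src_set G s (tail G e) \<subseteq> src_set G s u"
proof -
  interpret fin_digraph G using net by (simp add: network_def)
  have reach: "s i \<rightarrow>\<^sup>*\<^bsub>G\<^esub> u" and i3: "i \<in> {1,2,3}" using i by (auto simp: src_set_def)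
  have "u = s i \<or> (\<exists>e\<in>in_arcs G u. i \<in> src_set G s (tail G e))"
    using reach
  proof (induct rule: reachable_induct)
    case base then show ?case by simp
  next
    case (step x y)
    then obtain e where e: "e \<in> arcs G" "tail G e = x" "head G e = y" by auto
    have "i \<in> src_set G s x" using step(1) i3 by (simp add: src_set_def)
    then show ?case using e by auto
  qed
  then obtain e where "e \<in> in_arcs G u" "i \<in> src_set G s (tail G e)" using u by auto
  moreover have "src_set G s (tail G e) \<subseteq> src_set G s u"
    using src_set_arc_mono[OF net, of e] \<open>e \<in> in_arcs G u\<close> by auto
  ultimately show ?thesis by blast
qed

text \<open>A source is reached by itself only, since sources have no incoming arcs.\<close>
lemma src_set_of_source:
  assumes net: "network G s t" and i: "i \<in> {1,2,3}"
  shows "src_set G s (s i) = {i}"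
proof -
  have sources: "inj_on s {1,2,3}" "s ` {1,2,3} \<subseteq> verts G" "\<forall>i\<in>{1,2,3}. in_arcs G (s i) = {}"
    using net by (simp_all add: network_def)
  have src: "s i \<in> verts G" "in_arcs G (s i) = {}"
    by (rule subsetD[OF sources(2) imageI[OF i]], rule bspec[OF sources(3) i])
  have "j = i" if j: "j \<in> src_set G s (s i)" for j
  proof (rule ccontr)
    assume "j \<noteq> i"
    moreover have "j \<in> {1,2,3}" by (rule subsetD[OF src_set_bounded j])
    ultimately have "s i \<noteq> s j" using inj_on_contraD[OF sources(1)] i by metis
    then show False using in_arc_carrying_source[OF net j] src(2) by blast
  qed
  moreover have "s i \<rightarrow>\<^sup>*\<^bsub>G\<^esub> s i"
    using net src(1) by (simp add: network_def fin_digraph_def wf_digraph.reachable_refl)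
  then have "i \<in> src_set G s (s i)" using i by (simp add: src_set_def)
  ultimately show ?thesis by blast
qed

lemma card_2_Min_Max:
  assumes "card (A :: nat set) = 2"
  shows "A = {Min A, Max A}"
proof -
  obtain x y where "A = {x,y}" "x \<noteq> y" using assms by (auto simp: card_2_iff)
  then show ?thesis by (cases "x < y") (auto simp: min_def max_def)
qed

lemma proper_subset_of_pair:
  assumes "finite B" "card B \<le> 2" "A \<subset> B" "x \<in> A"
  shows "A = {x}"
proof (rule ccontr)
  assume "A \<noteq> {x}"
  then obtain z where "z \<in> A" "z \<noteq> x" using assms(4) by blast
  then have "{x,z} \<subset> B" using assms(3,4) by blast
  then have "card {x,z} < card B" using psubset_card_mono[OF assms(1)] by blast
  then show False using \<open>z \<noteq> x\<close> assms(2) by simp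
qed

definition tracked :: "('v,'e) pre_digraph \<Rightarrow> (nat \<Rightarrow> 'v) \<Rightarrow> (nat \<Rightarrow> 'v) \<Rightarrow> 'v \<Rightarrow> bool" where
  "tracked G s t u \<longleftrightarrow> card (src_set G s u) = 1 \<or> vtype G s t u = (2,2)"

definition vertex_value :: "('v,'e) pre_digraph \<Rightarrow> (nat \<Rightarrow> 'v) \<Rightarrow> (nat \<Rightarrow> 'v) \<Rightarrow>
    (nat \<times> nat \<times> nat \<times> nat \<Rightarrow> 'f \<Rightarrow> 'f \<Rightarrow> 'f) \<Rightarrow> (nat \<Rightarrow> 'f) \<Rightarrow> 'v \<Rightarrow> 'f" where
  "vertex_value G s t f X u =
     (if card (src_set G s u) = 1 then X (the_elem (src_set G s u))
      else case col G s t u of (a,b,c,d) \<Rightarrow> f (a,b,c,d) (X a) (X b))"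

definition arc_from :: "('v,'e) pre_digraph \<Rightarrow> (nat \<Rightarrow> 'v) \<Rightarrow> 'v \<Rightarrow> nat set \<Rightarrow> 'e" where
  "arc_from G s u A = (SOME e. e \<in> in_arcs G u \<and> src_set G s (tail G e) = A)"

lemma arc_from:
  assumes "\<exists>e\<in>in_arcs G u. src_set G s (tail G e) = A"
  shows "arc_from G s u A \<in> in_arcs G u" "src_set G s (tail G (arc_from G s u A)) = A"
  using someI_ex[of "\<lambda>e. e \<in> in_arcs G u \<and> src_set G s (tail G e) = A"] assms
  unfolding arc_from_def by blast+

definition decode :: "('v,'e) pre_digraph \<Rightarrow> (nat \<Rightarrow> 'v) \<Rightarrow> (nat \<Rightarrow> 'v) \<Rightarrow>
    (nat \<times> nat \<times> nat \<times> nat \<Rightarrow> 'f \<Rightarrow> 'f \<Rightarrow> 'f) \<Rightarrow> 'v \<Rightarrow> ('e \<Rightarrow> 'f) \<Rightarrow> 'f" where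
  "decode G s t f u \<rho> =
     (if \<exists>e\<in>in_arcs G u. src_set G s (tail G e) = src_set G s u
      then \<rho> (arc_from G s u (src_set G s u))
      else case col G s t u of (a,b,c,d) \<Rightarrow>
        f (a,b,c,d) (\<rho> (arc_from G s u {a})) (\<rho> (arc_from G s u {b})))"

text \<open>For (2,2) heads this is where the absence of
  (2,3) vertices enters: the tail has the same two sources and the same two terminals.\<close>
lemma relay_preserves_value:
  assumes net: "network G s t"
    and no23: "\<forall>v\<in>verts G. vtype G s t v \<noteq> (2,3)"
    and e: "e \<in> arcs G" and tr: "tracked G s t (head G e)"
    and same: "src_set G s (tail G e) = src_set G s (head G e)"
  shows "tracked G s t (tail G e) \<and> vertex_value G s t f X (tail G e) = vertex_value G s t f X (head G e)"
proof (cases "card (src_set G s (head G e)) = 1")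
  case True
  then show ?thesis using same by (simp add: tracked_def vertex_value_def)
next
  case False
  let ?T = "term_set G t (tail G e)" and ?T' = "term_set G t (head G e)"
  have cs: "card (src_set G s (head G e)) = 2" and ct: "card ?T' = 2"
    using False tr by (auto simp: tracked_def vtype_def c_s_def c_t_def)
  have sub: "?T' \<subseteq> ?T" using term_set_arc_antimono[OF net e] .
  have fin: "finite ?T" by (rule finite_subset[OF term_set_bounded]) simp
  have "card ?T \<le> 3" using card_mono[OF _ term_set_bounded, of G t "tail G e"] by simp
  moreover have "card ?T \<ge> 2" using card_mono[OF fin sub] ct by simp
  moreover have "vtype G s t (tail G e) \<noteq> (2,3)"
    using no23 e net by (auto simp: network_def dest: fin_digraph.axioms(1) wf_digraph.tail_in_verts)
  ultimately have "card ?T = 2" using same cs by (auto simp: vtype_def c_s_def c_t_def)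
  then have "?T = ?T'" using card_subset_eq[OF fin sub] ct by simp
  then show ?thesis using same cs ct
    by (simp add: tracked_def vertex_value_def vtype_def c_s_def c_t_def col_def)
qed

lemma decode_correct:
  assumes net: "network G s t"
    and no23: "\<forall>v\<in>verts G. vtype G s t v \<noteq> (2,3)"
    and u: "u \<notin> s ` {1,2,3}" and tr: "tracked G s t u"
    and \<rho>: "\<forall>e\<in>in_arcs G u. tracked G s t (tail G e) \<longrightarrow> \<rho> e = vertex_value G s t f X (tail G e)"
  shows "decode G s t f u \<rho> = vertex_value G s t f X u"
proof (cases "\<exists>e\<in>in_arcs G u. src_set G s (tail G e) = src_set G s u")
  case True
  let ?e = "arc_from G s u (src_set G s u)"
  have e: "?e \<in> arcs G" "head G ?e = u" "src_set G s (tail G ?e) = src_set G s u"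
    using arc_from[OF True] by auto
  have "tracked G s t (tail G ?e) \<and> vertex_value G s t f X (tail G ?e) = vertex_value G s t f X u"
    using relay_preserves_value[OF net no23 e(1), where f=f and X=X] e tr by simp
  then show ?thesis using True \<rho> arc_from(1)[OF True] by (simp add: decode_def)
next
  case no_relay: False
  have only_source: "\<exists>e\<in>in_arcs G u. src_set G s (tail G e) = {x}"
    if x: "x \<in> src_set G s u" and card: "card (src_set G s u) \<le> 2" for x
  proof -
    have "s x \<in> s ` {1,2,3}" by (rule imageI[OF subsetD[OF src_set_bounded x]])
    then have "u \<noteq> s x" using u by auto
    then obtain e where e: "e \<in> in_arcs G u" "x \<in> src_set G s (tail G e)"
        "src_set G s (tail G e) \<subseteq> src_set G s u"
      using in_arc_carrying_source[OF net x] by blast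
    have "src_set G s (tail G e) \<subset> src_set G s u" using e no_relay by blast
    then have "src_set G s (tail G e) = {x}"
      using proper_subset_of_pair[OF finite_subset[OF src_set_bounded] card] e(2) by blast
    then show ?thesis using e(1) by blast
  qed
  have cs: "card (src_set G s u) = 2"
  proof -
    have "card (src_set G s u) \<noteq> 1"
    proof
      assume "card (src_set G s u) = 1"
      then obtain x where "src_set G s u = {x}" by (auto simp: card_1_singleton_iff)
      then show False using no_relay only_source[of x] by auto
    qed
    then show ?thesis using tr by (simp add: tracked_def vtype_def c_s_def)
  qed
  define a where "a = Min (src_set G s u)"
  define b where "b = Max (src_set G s u)"
  have ab: "src_set G s u = {a,b}" using card_2_Min_Max[OF cs] by (simp add: a_def b_def)
  have ea: "\<exists>e\<in>in_arcs G u. src_set G s (tail G e) = {a}" and eb: "\<exists>e\<in>in_arcs G u. src_set G s (tail G e) = {b}"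
    using only_source cs ab by auto
  have "\<rho> (arc_from G s u {a}) = X a" "\<rho> (arc_from G s u {b}) = X b"
    using \<rho> arc_from[OF ea] arc_from[OF eb] by (auto simp: tracked_def vertex_value_def)
  then show ?thesis using no_relay cs
    by (simp add: decode_def vertex_value_def col_def a_def b_def split: prod.split)
qed

definition ancestor_count :: "('v,'e) pre_digraph \<Rightarrow> 'v \<Rightarrow> nat" where
  "ancestor_count G u = card {w \<in> verts G. w \<rightarrow>\<^sup>*\<^bsub>G\<^esub> u}"

lemma ancestor_count_arc:
  assumes net: "network G s t" and e: "e \<in> arcs G"
  shows "ancestor_count G (tail G e) < ancestor_count G (head G e)"
proof -
  interpret fin_digraph G using net by (simp add: network_def)
  let ?A = "\<lambda>u. {w \<in> verts G. w \<rightarrow>\<^sup>*\<^bsub>G\<^esub> u}"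
  have adj: "tail G e \<rightarrow>\<^bsub>G\<^esub> head G e" using arc_adj[OF e] .
  have hv: "head G e \<in> verts G" using e by auto
  have "\<not> head G e \<rightarrow>\<^sup>*\<^bsub>G\<^esub> tail G e"
  proof
    assume "head G e \<rightarrow>\<^sup>*\<^bsub>G\<^esub> tail G e"
    then have "head G e \<rightarrow>\<^sup>+\<^bsub>G\<^esub> head G e"
      using adj by (auto intro: reachable_reachable1_trans)
    then show False using net hv by (auto simp: network_def)
  qed
  then have "?A (tail G e) \<subset> ?A (head G e)"
    using adj hv by (auto intro: reachable_adj_trans)
  then show ?thesis unfolding ancestor_count_def by (rule psubset_card_mono[rotated]) simp
qed

lemma code_carries_values:
  assumes net: "network G s t"
    and no23: "\<forall>v\<in>verts G. vtype G s t v \<noteq> (2,3)"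
    and ind: "induced G s (\<lambda>e x. x) (\<lambda>e. decode G s t f (tail G e)) X \<sigma>"
  shows "e \<in> arcs G \<Longrightarrow> tracked G s t (tail G e) \<Longrightarrow> \<sigma> e = vertex_value G s t f X (tail G e)"
proof (induct e rule: measure_induct_rule[of "\<lambda>e. ancestor_count G (tail G e)"])
  case (less e)
  show ?case
  proof (cases "tail G e \<in> s ` {1,2,3}")
    case True
    then obtain i where i: "i \<in> {1,2,3}" "tail G e = s i" by auto
    then have "\<sigma> e = X i" using ind less.prems unfolding induced_def by blast
    then show ?thesis using src_set_of_source[OF net i(1)] i by (simp add: vertex_value_def)
  next
    case False
    let ?u = "tail G e"
    have "\<forall>e'\<in>in_arcs G ?u. tracked G s t (tail G e') \<longrightarrow>
            restrict \<sigma> (in_arcs G ?u) e' = vertex_value G s t f X (tail G e')"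
    proof (intro ballI impI)
      fix e' assume e': "e' \<in> in_arcs G ?u" and tr': "tracked G s t (tail G e')"
      then have "ancestor_count G (tail G e') < ancestor_count G (tail G e)"
        using ancestor_count_arc[OF net, of e'] by simp
      then show "restrict \<sigma> (in_arcs G ?u) e' = vertex_value G s t f X (tail G e')"
        using less.hyps e' tr' by simp
    qed
    then have "decode G s t f ?u (restrict \<sigma> (in_arcs G ?u)) = vertex_value G s t f X ?u"
      using decode_correct[OF net no23 False less.prems(2)] by blast
    then show ?thesis using ind less.prems False unfolding induced_def by auto
  qed
qed

theorem mainTheorem11:
  fixes G :: "('v,'e) pre_digraph" and s t :: "nat \<Rightarrow> 'v"
    and f :: "nat \<times> nat \<times> nat \<times> nat \<Rightarrow> 'f::{field,finite} \<Rightarrow> 'f \<Rightarrow> 'f"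
  assumes "network G s t"
    and "\<forall>v\<in>verts G. vtype G s t v \<notin> {(3,3),(2,3),(3,2)}"
  shows "\<exists>(srcf :: 'e \<Rightarrow> 'f \<Rightarrow> 'f) (locf :: 'e \<Rightarrow> ('e \<Rightarrow> 'f) \<Rightarrow> 'f).
           \<forall>v\<in>verts G. vtype G s t v = (2,2) \<longrightarrow>
             (case col G s t v of (a,b,c,d) \<Rightarrow>
                computes G s srcf locf v (\<lambda>X. f (a,b,c,d) (X a) (X b)))"
proof (intro exI ballI impI)
  fix v assume v: "v \<in> verts G" and ty: "vtype G s t v = (2,2)"
  have no23: "\<forall>v\<in>verts G. vtype G s t v \<noteq> (2,3)" using assms(2) by auto
  have tr: "tracked G s t v" using ty by (simp add: tracked_def)
  have nsrc: "v \<notin> s ` {1,2,3}" using ty src_set_of_source[OF assms(1)] by (auto simp: vtype_def c_s_def)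
  obtain a b c d where cl: "col G s t v = (a,b,c,d)" by (cases "col G s t v") auto
  have "computes G s (\<lambda>e x. x) (\<lambda>e. decode G s t f (tail G e)) v (\<lambda>X. f (a,b,c,d) (X a) (X b))"
    unfolding computes_def
  proof (intro exI allI impI)
    fix X \<sigma> assume ind: "induced G s (\<lambda>e x. x) (\<lambda>e. decode G s t f (tail G e)) X \<sigma>"
    have "\<forall>e\<in>in_arcs G v. tracked G s t (tail G e) \<longrightarrow>
            restrict \<sigma> (in_arcs G v) e = vertex_value G s t f X (tail G e)"
      using code_carries_values[OF assms(1) no23 ind] by simp
    then have "decode G s t f v (restrict \<sigma> (in_arcs G v)) = vertex_value G s t f X v"
      by (rule decode_correct[OF assms(1) no23 nsrc tr])
    then show "decode G s t f v (restrict \<sigma> (in_arcs G v)) = f (a,b,c,d) (X a) (X b)"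
      using ty cl by (simp add: vertex_value_def vtype_def c_s_def)
  qed
  then show "case col G s t v of (a,b,c,d) \<Rightarrow>
      computes G s (\<lambda>e x. x) (\<lambda>e. decode G s t f (tail G e)) v (\<lambda>X. f (a,b,c,d) (X a) (X b))"
    using cl by simp
qed

end
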